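(* Let $S$ be an idempotent semiring. The following are equivalent: (1) $\mathcal{L}^{\bullet}$ is the least distributive lattice congruence on $S$; (2) $\mathcal{D}^{+}\subseteq\mathcal{L}^{\bullet}$ and $S$ satisfies $x+xy+x\approx x$; (3) $S$ satisfies $x+xyx+x\approx x$ and $\mathcal{R}^{\bullet}\subseteq\mathcal{D}^{+}\subseteq\mathcal{L}^{\bullet}$; (4) $\leq^{l}_{\cdot}\ \subseteq\ \leq_{+}$ on $S$; (5) $S$ satisfies the identity $x\approx xy+x+xy$; (6) $S$ satisfies the identity $x\approx x(y+x+y)$.
   Context: An idempotent semiring is an algebra $(S,+,\cdot)$ with two binary operations such that $(S,+)$ and $(S,\cdot)$ are bands (associative, with $x+x=x$ and $xx=x$), and both distributive laws $x(y+z)=xy+xz$ and $(x+y)z=xz+yz$ hold; addition is not assumed commutative. A distributive lattice congruence on $S$ is a congruence $\rho$ such that $S/\rho$ satisfies $x+y\approx y+x$, $xy\approx yx$ and $x+xy\approx x$. Green's relations: $a\,\mathcal{L}^{\bullet}\,b$ iff $ab=a$ and $ba=b$; $a\,\mathcal{R}^{\bullet}\,b$ iff $ab=b$ and $ba=a$; $a\,\mathcal{D}^{+}\,b$ iff $a+b+a=a$ and $b+a+b=b$. Orders: $a\leq^{l}_{\cdot} b$ iff $a=ba$; $a\leq_{+} b$ iff $b=a+b$ and $b=b+a$. *)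

theory Defs
  imports Main
begin

text \<open>An idempotent semiring on the whole type 'a, with addition pl and multiplication ml
  (addition not assumed commutative).\<close>

definition idem_semiring :: "('a \<Rightarrow> 'a \<Rightarrow> 'a) \<Rightarrow> ('a \<Rightarrow> 'a \<Rightarrow> 'a) \<Rightarrow> bool" where
  "idem_semiring pl ml \<longleftrightarrow>
     (\<forall>x y z. pl (pl x y) z = pl x (pl y z)) \<and> (\<forall>x. pl x x = x) \<and>
     (\<forall>x y z. ml (ml x y) z = ml x (ml y z)) \<and> (\<forall>x. ml x x = x) \<and>
     (\<forall>x y z. ml x (pl y z) = pl (ml x y) (ml x z)) \<and>
     (\<forall>x y z. ml (pl x y) z = pl (ml x z) (ml y z))"

definition sr_congruence :: "('a \<Rightarrow> 'a \<Rightarrow> 'a) \<Rightarrow> ('a \<Rightarrow> 'a \<Rightarrow> 'a) \<Rightarrow> ('a \<times> 'a) set \<Rightarrow> bool" where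
  "sr_congruence pl ml \<rho> \<longleftrightarrow> equiv UNIV \<rho> \<and>
     (\<forall>a b c d. (a, b) \<in> \<rho> \<longrightarrow> (c, d) \<in> \<rho> \<longrightarrow>
        (pl a c, pl b d) \<in> \<rho> \<and> (ml a c, ml b d) \<in> \<rho>)"

definition dl_congruence :: "('a \<Rightarrow> 'a \<Rightarrow> 'a) \<Rightarrow> ('a \<Rightarrow> 'a \<Rightarrow> 'a) \<Rightarrow> ('a \<times> 'a) set \<Rightarrow> bool" where
  "dl_congruence pl ml \<rho> \<longleftrightarrow> sr_congruence pl ml \<rho> \<and>
     (\<forall>x y. (pl x y, pl y x) \<in> \<rho>) \<and> (\<forall>x y. (ml x y, ml y x) \<in> \<rho>) \<and>
     (\<forall>x y. (pl x (ml x y), x) \<in> \<rho>)"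

definition least_dl_congruence :: "('a \<Rightarrow> 'a \<Rightarrow> 'a) \<Rightarrow> ('a \<Rightarrow> 'a \<Rightarrow> 'a) \<Rightarrow> ('a \<times> 'a) set \<Rightarrow> bool" where
  "least_dl_congruence pl ml \<rho> \<longleftrightarrow> dl_congruence pl ml \<rho> \<and>
     (\<forall>\<sigma>. dl_congruence pl ml \<sigma> \<longrightarrow> \<rho> \<subseteq> \<sigma>)"

definition Lmul :: "('a \<Rightarrow> 'a \<Rightarrow> 'a) \<Rightarrow> ('a \<times> 'a) set" where
  "Lmul ml = {(a, b). ml a b = a \<and> ml b a = b}"

definition Rmul :: "('a \<Rightarrow> 'a \<Rightarrow> 'a) \<Rightarrow> ('a \<times> 'a) set" where
  "Rmul ml = {(a, b). ml a b = b \<and> ml b a = a}"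

definition Dplus :: "('a \<Rightarrow> 'a \<Rightarrow> 'a) \<Rightarrow> ('a \<times> 'a) set" where
  "Dplus pl = {(a, b). pl (pl a b) a = a \<and> pl (pl b a) b = b}"

definition leq_lmul :: "('a \<Rightarrow> 'a \<Rightarrow> 'a) \<Rightarrow> ('a \<times> 'a) set" where
  "leq_lmul ml = {(a, b). a = ml b a}"

definition leq_plus :: "('a \<Rightarrow> 'a \<Rightarrow> 'a) \<Rightarrow> ('a \<times> 'a) set" where
  "leq_plus pl = {(a, b). b = pl a b \<and> b = pl b a}"

end

theory Submission
  imports Defs
begin

text \<open>All six conditions are equivalent to the absorption laws \<open>x + xy = x = xy + x\<close>,
  i.e. to \<open>xy \<le>\<^sub>+ x\<close>. These laws imply left regularity \<open>xyx = xy\<close> of the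
  multiplicative band; left regularity makes \<open>\<L>\<^sup>\<bullet>\<close> compatible with multiplication
  and the absorption laws make it compatible with addition, with a commutative quotient. Conversely,
  every distributive lattice congruence identifies \<open>ab\<close> with \<open>ba\<close> and therefore
  contains \<open>\<L>\<^sup>\<bullet>\<close>.\<close>

locale idempotent_semiring =
  fixes pl :: "'a \<Rightarrow> 'a \<Rightarrow> 'a" (infixr "\<oplus>" 65)
    and ml :: "'a \<Rightarrow> 'a \<Rightarrow> 'a" (infixr "\<odot>" 70)
  assumes idem_semiring: "idem_semiring pl ml"
begin

lemma plus_assoc [simp]: "(x \<oplus> y) \<oplus> z = x \<oplus> y \<oplus> z"
  and plus_idem [simp]: "x \<oplus> x = x"
  and mult_assoc [simp]: "(x \<odot> y) \<odot> z = x \<odot> y \<odot> z"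
  and mult_idem [simp]: "x \<odot> x = x"
  and distrib_left [simp]: "x \<odot> (y \<oplus> z) = x \<odot> y \<oplus> x \<odot> z"
  and distrib_right [simp]: "(x \<oplus> y) \<odot> z = x \<odot> z \<oplus> y \<odot> z"
  using idem_semiring unfolding idem_semiring_def by blast+

lemma plus_left_idem [simp]: "x \<oplus> x \<oplus> y = x \<oplus> y"
  by (metis plus_assoc plus_idem)

lemma mult_left_idem [simp]: "x \<odot> x \<odot> y = x \<odot> y"
  by (metis mult_assoc mult_idem)

lemma mult_idem_product [simp]: "x \<odot> y \<odot> x \<odot> y = x \<odot> y"
  by (metis mult_assoc mult_idem)

lemma mult_left_idem_product [simp]: "x \<odot> y \<odot> x \<odot> y \<odot> z = x \<odot> y \<odot> z"
  by (metis mult_assoc mult_idem)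

definition absorptive :: bool where
  "absorptive \<longleftrightarrow> (\<forall>x y. x \<oplus> x \<odot> y = x \<and> x \<odot> y \<oplus> x = x)"

lemma absorptiveD:
  assumes absorptive
  shows "x \<oplus> x \<odot> y = x" and "x \<odot> y \<oplus> x = x"
  using assms unfolding absorptive_def by blast+

lemma absorptive_iff_sandwich: "absorptive \<longleftrightarrow> (\<forall>x y. x = (x \<odot> y \<oplus> x) \<oplus> x \<odot> y)"
proof
  assume absorptive
  then show "\<forall>x y. x = (x \<odot> y \<oplus> x) \<oplus> x \<odot> y"
    by (simp add: absorptiveD)
next
  assume "\<forall>x y. x = (x \<odot> y \<oplus> x) \<oplus> x \<odot> y"
  then have sandwich: "\<forall>x y. x = x \<odot> y \<oplus> x \<oplus> x \<odot> y"
    by simp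
  have "x \<oplus> x \<odot> y = x" and "x \<odot> y \<oplus> x = x" for x y
  proof -
    have "x \<oplus> x \<odot> y = (x \<odot> y \<oplus> x \<oplus> x \<odot> y) \<oplus> x \<odot> y"
      using sandwich by metis
    also have "\<dots> = x" using sandwich by (metis plus_assoc plus_idem)
    finally show "x \<oplus> x \<odot> y = x" .
    have "x \<odot> y \<oplus> x = x \<odot> y \<oplus> (x \<odot> y \<oplus> x \<oplus> x \<odot> y)"
      using sandwich by metis
    also have "\<dots> = x" using sandwich by (metis plus_left_idem)
    finally show "x \<odot> y \<oplus> x = x" .
  qed
  then show absorptive
    unfolding absorptive_def by blast
qed

lemma absorptive_iff_leq_lmul_subset_leq_plus: "absorptive \<longleftrightarrow> leq_lmul ml \<subseteq> leq_plus pl"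
proof
  assume absorptive
  show "leq_lmul ml \<subseteq> leq_plus pl"
  proof (rule subrelI)
    fix a b
    assume "(a, b) \<in> leq_lmul ml"
    then have "b \<odot> a = a"
      unfolding leq_lmul_def by simp
    then have "a \<oplus> b = b" and "b \<oplus> a = b"
      using absorptiveD[OF \<open>absorptive\<close>, of b a] by simp_all
    then show "(a, b) \<in> leq_plus pl"
      unfolding leq_plus_def by simp
  qed
next
  assume leq: "leq_lmul ml \<subseteq> leq_plus pl"
  have "(x \<odot> y, x) \<in> leq_plus pl" for x y
    using leq unfolding leq_lmul_def by auto
  then have "x \<oplus> x \<odot> y = x" and "x \<odot> y \<oplus> x = x" for x y
    unfolding leq_plus_def by simp_all
  then show absorptive
    unfolding absorptive_def by blast
qed

lemma absorptive_left_regular: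
  assumes absorptive
  shows "x \<odot> y \<odot> x = x \<odot> y"
proof -
  have "x \<odot> y = x \<odot> y \<oplus> x \<odot> y \<odot> x"
    using absorptiveD(1)[OF assms, of "x \<odot> y" x] by simp
  also have "\<dots> = x \<odot> y \<odot> x"
    using absorptiveD(2)[OF assms, of "x \<odot> y \<odot> x" y] by simp
  finally show ?thesis ..
qed

lemma Lmul_iff: "(a, b) \<in> Lmul ml \<longleftrightarrow> a \<odot> b = a \<and> b \<odot> a = b"
  by (simp add: Lmul_def)

lemma equiv_Lmul: "equiv UNIV (Lmul ml)"
proof (rule equivI)
  show "Lmul ml \<subseteq> UNIV \<times> UNIV"
    by simp
  show "refl (Lmul ml)"
    by (rule reflI) (simp add: Lmul_def)
  show "sym (Lmul ml)"
    by (rule symI) (simp add: Lmul_def)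
  show "trans (Lmul ml)"
    by (rule transI) (simp add: Lmul_def, metis mult_assoc)
qed

lemma Lmul_mult_compatible:
  assumes left_regular: "\<And>x y. x \<odot> y \<odot> x = x \<odot> y"
    and "(a, b) \<in> Lmul ml" "(c, d) \<in> Lmul ml"
  shows "(a \<odot> c, b \<odot> d) \<in> Lmul ml"
proof -
  have absorb: "u \<odot> w \<odot> v \<odot> z = u \<odot> w" if "u \<odot> v = u" "w \<odot> z = w" for u v w z
  proof -
    have "u \<odot> w \<odot> v \<odot> z = u \<odot> v \<odot> w \<odot> v \<odot> z"
      using \<open>u \<odot> v = u\<close> by (metis mult_assoc)
    also have "\<dots> = u \<odot> v \<odot> w \<odot> z"
      using left_regular[of v w] by (metis mult_assoc)
    finally show ?thesis
      using that by (metis mult_assoc)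
  qed
  show ?thesis
    using assms(2,3) absorb unfolding Lmul_def by simp
qed

lemma Lmul_plus_compatible:
  assumes absorptive "(a, b) \<in> Lmul ml" "(c, d) \<in> Lmul ml"
  shows "(a \<oplus> c, b \<oplus> d) \<in> Lmul ml"
proof -
  have absorb: "(u \<oplus> w) \<odot> (v \<oplus> z) = u \<oplus> w" if "u \<odot> v = u" "w \<odot> z = w" for u v w z
  proof -
    have "(u \<oplus> w) \<odot> (v \<oplus> z) = u \<odot> (v \<oplus> z) \<oplus> w \<odot> (v \<oplus> z)"
      by (rule distrib_right)
    also have "\<dots> = (u \<oplus> u \<odot> z) \<oplus> (w \<odot> v \<oplus> w)"
      using that by simp
    also have "\<dots> = u \<oplus> w"
      by (simp only: absorptiveD[OF \<open>absorptive\<close>])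
    finally show ?thesis .
  qed
  show ?thesis
    using assms(2,3) absorb unfolding Lmul_iff by blast
qed

lemma absorptive_dl_congruence_Lmul:
  assumes absorptive
  shows "dl_congruence pl ml (Lmul ml)"
proof -
  note absorb = absorptiveD[OF assms] and left_regular = absorptive_left_regular[OF assms]
  have swap: "(u \<oplus> v) \<odot> (v \<oplus> u) = u \<oplus> v" for u v
  proof -
    have "(u \<oplus> v) \<odot> (v \<oplus> u) = u \<odot> (v \<oplus> u) \<oplus> v \<odot> (v \<oplus> u)"
      by (rule distrib_right)
    also have "\<dots> = (u \<odot> v \<oplus> u) \<oplus> (v \<oplus> v \<odot> u)"
      by simp
    also have "\<dots> = u \<oplus> v"
      by (simp only: absorb)
    finally show ?thesis .
  qed
  show ?thesis
    unfolding dl_congruence_def sr_congruence_def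
  proof (intro conjI allI impI)
    show "equiv UNIV (Lmul ml)"
      by (rule equiv_Lmul)
    fix a b c d
    assume "(a, b) \<in> Lmul ml" "(c, d) \<in> Lmul ml"
    then show "(a \<oplus> c, b \<oplus> d) \<in> Lmul ml" and "(a \<odot> c, b \<odot> d) \<in> Lmul ml"
      using Lmul_plus_compatible[OF assms] Lmul_mult_compatible[OF left_regular] by blast+
  next
    fix x y
    show "(x \<oplus> y, y \<oplus> x) \<in> Lmul ml"
      unfolding Lmul_iff using swap by blast
    show "(x \<odot> y, y \<odot> x) \<in> Lmul ml"
      unfolding Lmul_def using left_regular by simp
    show "(x \<oplus> x \<odot> y, x) \<in> Lmul ml"
      unfolding Lmul_def using absorb by simp
  qed
qed

lemma Lmul_subset_dl_congruence:
  assumes "dl_congruence pl ml \<sigma>"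
  shows "Lmul ml \<subseteq> \<sigma>"
proof
  fix p
  assume "p \<in> Lmul ml"
  then obtain a b where "p = (a, b)" "a \<odot> b = a" "b \<odot> a = b"
    unfolding Lmul_def by blast
  moreover have "(a \<odot> b, b \<odot> a) \<in> \<sigma>"
    using assms unfolding dl_congruence_def by blast
  ultimately show "p \<in> \<sigma>" by simp
qed

lemma least_dl_congruence_Lmul_iff_absorptive:
  "least_dl_congruence pl ml (Lmul ml) \<longleftrightarrow> absorptive"
proof
  assume "least_dl_congruence pl ml (Lmul ml)"
  then have congr: "dl_congruence pl ml (Lmul ml)"
    unfolding least_dl_congruence_def by blast
  have sum_absorbs: "x \<oplus> x \<odot> y = x" for x y
    using congr unfolding dl_congruence_def Lmul_def by simp
  moreover have "x \<odot> y \<oplus> x = x" for x y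
  proof -
    have "(x \<oplus> x \<odot> y) \<odot> (x \<odot> y \<oplus> x) = x \<oplus> x \<odot> y"
      using congr unfolding dl_congruence_def Lmul_def by blast
    then show ?thesis using sum_absorbs by simp
  qed
  ultimately show absorptive
    unfolding absorptive_def by blast
next
  assume absorptive
  then show "least_dl_congruence pl ml (Lmul ml)"
    unfolding least_dl_congruence_def
    using absorptive_dl_congruence_Lmul Lmul_subset_dl_congruence by blast
qed

lemma absorptive_Dplus_subset_Lmul:
  assumes absorptive
  shows "Dplus pl \<subseteq> Lmul ml"
proof
  fix p
  assume "p \<in> Dplus pl"
  then obtain a b where p: "p = (a, b)" "a \<oplus> b \<oplus> a = a" "b \<oplus> a \<oplus> b = b"
    unfolding Dplus_def by auto
  have "a \<odot> b = a \<odot> (b \<oplus> a \<oplus> b)" and "b \<odot> a = b \<odot> (a \<oplus> b \<oplus> a)"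
    using p by simp_all
  then show "p \<in> Lmul ml"
    using p(1) absorptiveD[OF assms] unfolding Lmul_def by simp
qed

lemma absorptive_iff_Dplus_subset_Lmul:
  "absorptive \<longleftrightarrow> Dplus pl \<subseteq> Lmul ml \<and> (\<forall>x y. (x \<oplus> x \<odot> y) \<oplus> x = x)"
proof
  assume absorptive
  then show "Dplus pl \<subseteq> Lmul ml \<and> (\<forall>x y. (x \<oplus> x \<odot> y) \<oplus> x = x)"
    using absorptive_Dplus_subset_Lmul absorptiveD by simp
next
  assume "Dplus pl \<subseteq> Lmul ml \<and> (\<forall>x y. (x \<oplus> x \<odot> y) \<oplus> x = x)"
  then have D: "Dplus pl \<subseteq> Lmul ml" and sandwich: "\<And>x y. x \<oplus> x \<odot> y \<oplus> x = x"
    by simp_all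
  have sandwich_left: "x \<oplus> x \<odot> y \<oplus> x \<oplus> z = x \<oplus> z" for x y z
    by (metis plus_assoc sandwich)
  text \<open>Both \<open>x + xy\<close> and \<open>xy + x\<close> are \<open>\<D>\<^sup>+\<close>-related to \<open>x\<close>; left multiplication by
    \<open>x\<close> then yields the absorption laws.\<close>
  have "x \<oplus> x \<odot> y = x" and "x \<odot> y \<oplus> x = x" for x y
  proof -
    have "(x, x \<oplus> x \<odot> y) \<in> Dplus pl" and "(x, x \<odot> y \<oplus> x) \<in> Dplus pl"
      unfolding Dplus_def using sandwich sandwich_left by simp_all
    then have "x \<odot> (x \<oplus> x \<odot> y) = x" and "x \<odot> (x \<odot> y \<oplus> x) = x"
      using D unfolding Lmul_def by blast+
    then show "x \<oplus> x \<odot> y = x" and "x \<odot> y \<oplus> x = x" by simp_all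
  qed
  then show absorptive
    unfolding absorptive_def by blast
qed

lemma absorptive_Rmul_eq:
  assumes absorptive "(a, b) \<in> Rmul ml"
  shows "a = b"
proof -
  have ab: "a \<odot> b = b" and ba: "b \<odot> a = a"
    using assms(2) unfolding Rmul_def by simp_all
  have "a = a \<oplus> a \<odot> b"
    using absorptiveD(1)[OF assms(1)] by simp
  also have "\<dots> = b \<odot> a \<oplus> b"
    unfolding ab ba ..
  also have "\<dots> = b"
    using absorptiveD(2)[OF assms(1)] by simp
  finally show ?thesis .
qed

lemma absorptive_iff_Rmul_subset_Dplus_subset_Lmul:
  "absorptive \<longleftrightarrow>
    (\<forall>x y. (x \<oplus> (x \<odot> y) \<odot> x) \<oplus> x = x) \<and> Rmul ml \<subseteq> Dplus pl \<and> Dplus pl \<subseteq> Lmul ml"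
proof
  assume absorptive
  have "(x \<oplus> (x \<odot> y) \<odot> x) \<oplus> x = x" for x y
    using absorptive_left_regular[OF \<open>absorptive\<close>] absorptiveD[OF \<open>absorptive\<close>] by simp
  moreover have "Rmul ml \<subseteq> Dplus pl"
  proof (rule subrelI)
    fix a b
    assume "(a, b) \<in> Rmul ml"
    then have "a = b"
      by (rule absorptive_Rmul_eq[OF \<open>absorptive\<close>])
    then show "(a, b) \<in> Dplus pl"
      by (simp add: Dplus_def)
  qed
  ultimately show "(\<forall>x y. (x \<oplus> (x \<odot> y) \<odot> x) \<oplus> x = x) \<and> Rmul ml \<subseteq> Dplus pl \<and> Dplus pl \<subseteq> Lmul ml"
    using absorptive_Dplus_subset_Lmul[OF \<open>absorptive\<close>] by blast
next
  assume "(\<forall>x y. (x \<oplus> (x \<odot> y) \<odot> x) \<oplus> x = x) \<and> Rmul ml \<subseteq> Dplus pl \<and> Dplus pl \<subseteq> Lmul ml"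
  then have sandwich: "\<And>x y. (x \<oplus> (x \<odot> y) \<odot> x) \<oplus> x = x"
    and R: "Rmul ml \<subseteq> Dplus pl" and D: "Dplus pl \<subseteq> Lmul ml"
    by blast+
  have left_regular: "x \<odot> y \<odot> x = x \<odot> y" for x y
  proof -
    have "(x \<odot> y, x \<odot> y \<odot> x) \<in> Rmul ml"
      unfolding Rmul_def by simp
    then have "(x \<odot> y, x \<odot> y \<odot> x) \<in> Lmul ml"
      using R D by blast
    then have "(x \<odot> y) \<odot> (x \<odot> y \<odot> x) = x \<odot> y"
      unfolding Lmul_iff by (rule conjunct1)
    then show ?thesis
      by simp
  qed
  have "(x \<oplus> x \<odot> y) \<oplus> x = x" for x y
    using sandwich[of x y] unfolding mult_assoc left_regular .
  then show absorptive
    using D absorptive_iff_Dplus_subset_Lmul by blast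
qed

end

theorem theorem3p3:
  fixes pl ml :: "'a \<Rightarrow> 'a \<Rightarrow> 'a"
  assumes "idem_semiring pl ml"
  shows
   "(least_dl_congruence pl ml (Lmul ml) \<longleftrightarrow>
       (Dplus pl \<subseteq> Lmul ml \<and> (\<forall>x y. pl (pl x (ml x y)) x = x))) \<and>
    ((Dplus pl \<subseteq> Lmul ml \<and> (\<forall>x y. pl (pl x (ml x y)) x = x)) \<longleftrightarrow>
       ((\<forall>x y. pl (pl x (ml (ml x y) x)) x = x) \<and> Rmul ml \<subseteq> Dplus pl \<and> Dplus pl \<subseteq> Lmul ml)) \<and>
    (((\<forall>x y. pl (pl x (ml (ml x y) x)) x = x) \<and> Rmul ml \<subseteq> Dplus pl \<and> Dplus pl \<subseteq> Lmul ml) \<longleftrightarrow>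
       leq_lmul ml \<subseteq> leq_plus pl) \<and>
    (leq_lmul ml \<subseteq> leq_plus pl \<longleftrightarrow> (\<forall>x y. x = pl (pl (ml x y) x) (ml x y))) \<and>
    ((\<forall>x y. x = pl (pl (ml x y) x) (ml x y)) \<longleftrightarrow> (\<forall>x y. x = ml x (pl (pl y x) y)))"
proof -
  interpret idempotent_semiring pl ml
    by (rule idempotent_semiring.intro) (rule assms)
  have "(\<forall>x y. x = ml x (pl (pl y x) y)) \<longleftrightarrow> absorptive"
    unfolding absorptive_iff_sandwich by simp
  then show ?thesis
    by (simp only: least_dl_congruence_Lmul_iff_absorptive
        absorptive_iff_Dplus_subset_Lmul[symmetric]
        absorptive_iff_Rmul_subset_Dplus_subset_Lmul[symmetric]
        absorptive_iff_leq_lmul_subset_leq_plus[symmetric] absorptive_iff_sandwich[symmetric])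
qed

end
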